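(* Counting the solutions of nondeterministic constraint logic (NCL) instances is not $\mathsf{\#P}$-complete under parsimonious reductions.
   Context: An NCL instance is a 3-regular undirected graph whose edges are colored blue or red, with each vertex incident to either exactly one or exactly three blue edges. A solution is an orientation of its edges such that every vertex has at least one incoming blue edge or at least two incoming red edges. A parsimonious reduction from counting problem $X$ to counting problem $Y$ is a polynomial-time transformation of instances of $X$ into instances of $Y$ with the same number of solutions. *)

theory Defs
  imports Main
begin

record 'v ncl =
  nverts :: "'v set"
  nedges :: "'v set set"
  nblue  :: "'v set set"

definition incident :: "'v set set \<Rightarrow> 'v \<Rightarrow> 'v set set" where
  "incident F v = {e \<in> F. v \<in> e}"

definition ncl_instance :: "'v ncl \<Rightarrow> bool" where
  "ncl_instance G \<longleftrightarrow>
     finite (nverts G) \<and> nverts G \<noteq> {} \<and>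
     (\<forall>e \<in> nedges G. e \<subseteq> nverts G \<and> card e = 2) \<and>
     (\<forall>v \<in> nverts G. card (incident (nedges G) v) = 3) \<and>
     nblue G \<subseteq> nedges G \<and>
     (\<forall>v \<in> nverts G. card (incident (nblue G) v) \<in> {1, 3})"

text \<open>An orientation is a set of arcs (u,w) (meaning u \<rightarrow> w) containing, for each
 edge {u,w}, exactly one of (u,w), (w,u), and nothing else.\<close>

definition orientation :: "'v ncl \<Rightarrow> ('v \<times> 'v) set \<Rightarrow> bool" where
  "orientation G A \<longleftrightarrow>
     (\<forall>(u, w) \<in> A. {u, w} \<in> nedges G) \<and>
     (\<forall>u w. {u, w} \<in> nedges G \<longrightarrow> ((u, w) \<in> A \<longleftrightarrow> (w, u) \<notin> A))"

definition in_blue :: "'v ncl \<Rightarrow> ('v \<times> 'v) set \<Rightarrow> 'v \<Rightarrow> nat" where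
  "in_blue G A v = card {u. (u, v) \<in> A \<and> {u, v} \<in> nblue G}"

definition in_red :: "'v ncl \<Rightarrow> ('v \<times> 'v) set \<Rightarrow> 'v \<Rightarrow> nat" where
  "in_red G A v = card {u. (u, v) \<in> A \<and> {u, v} \<in> nedges G - nblue G}"

definition ncl_solutions :: "'v ncl \<Rightarrow> ('v \<times> 'v) set set" where
  "ncl_solutions G = {A. orientation G A \<and>
     (\<forall>v \<in> nverts G. in_blue G A v \<ge> 1 \<or> in_red G A v \<ge> 2)}"

type_synonym lit = "nat \<times> bool"   (* (variable, polarity) *)
type_synonym cnf = "lit list list"

definition cnf_vars :: "cnf \<Rightarrow> nat set" where
  "cnf_vars F = {x. \<exists>c \<in> set F. \<exists>b. (x, b) \<in> set c}"

text \<open>An assignment is represented by the set of variables set to true.\<close>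
definition cnf_sat :: "nat set \<Rightarrow> cnf \<Rightarrow> bool" where
  "cnf_sat T F \<longleftrightarrow> (\<forall>c \<in> set F. \<exists>(x, b) \<in> set c. (x \<in> T) = b)"

definition sat_count :: "cnf \<Rightarrow> nat" where
  "sat_count F = card {T. T \<subseteq> cnf_vars F \<and> cnf_sat T F}"

end

theory Submission
  imports Defs
begin

(* The empty formula has exactly one satisfying assignment, so it suffices that no NCL instance
   has exactly one solution. Let A be a solution. If reversing every arc of A gives a solution,
   it is a different one. Otherwise some vertex v fails in the reversal: in A every blue edge at v
   points into v and at most one edge points out of v. Then v has a blue in-neighbour w and a
   second in-neighbour z; reversing the arc z -> v keeps v satisfied through w and only adds
   incoming arcs elsewhere, so it yields another solution. *)

definition satisfied :: "'v ncl \<Rightarrow> ('v \<times> 'v) set \<Rightarrow> 'v \<Rightarrow> bool" where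
  "satisfied G A v \<longleftrightarrow> in_blue G A v \<ge> 1 \<or> in_red G A v \<ge> 2"

lemma ncl_solutions_iff:
  "A \<in> ncl_solutions G \<longleftrightarrow> orientation G A \<and> (\<forall>v \<in> nverts G. satisfied G A v)"
  unfolding ncl_solutions_def satisfied_def by simp

lemma orientation_edge:
  assumes "orientation G A" "(u, w) \<in> A"
  shows "{u, w} \<in> nedges G"
  using assms unfolding orientation_def by auto

lemma orientation_arc_iff:
  assumes "orientation G A" "{u, w} \<in> nedges G"
  shows "(u, w) \<in> A \<longleftrightarrow> (w, u) \<notin> A"
  using assms unfolding orientation_def by blast

lemma orientation_converse:
  assumes "orientation G A"
  shows "orientation G (converse A)"
proof -
  have "{u, w} \<in> nedges G" if "(w, u) \<in> A" for u w
    using orientation_edge[OF assms that] by (simp add: insert_commute)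
  moreover have "(u, w) \<in> converse A \<longleftrightarrow> (w, u) \<notin> converse A" if "{u, w} \<in> nedges G" for u w
    using orientation_arc_iff[OF assms, of w u] that by (simp add: insert_commute)
  ultimately show ?thesis unfolding orientation_def by auto
qed

lemma orientation_converse_neq:
  assumes "orientation G A" "{u, w} \<in> nedges G"
  shows "converse A \<noteq> A"
  using orientation_arc_iff[OF assms] by auto

definition reverse_arc :: "('v \<times> 'v) set \<Rightarrow> 'v \<Rightarrow> 'v \<Rightarrow> ('v \<times> 'v) set" where
  "reverse_arc A z v = insert (v, z) (A - {(z, v)})"

lemma orientation_reverse_arc:
  assumes A: "orientation G A" and zv: "(z, v) \<in> A"
  shows "orientation G (reverse_arc A z v)"
proof -
  have e: "{z, v} \<in> nedges G" using orientation_edge[OF A zv] .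
  have "(v, z) \<notin> A" using orientation_arc_iff[OF A e] zv by blast
  have "z \<noteq> v" using \<open>(v, z) \<notin> A\<close> zv by blast
  show ?thesis
    unfolding orientation_def
  proof (intro conjI allI impI)
    show "\<forall>(x, y) \<in> reverse_arc A z v. {x, y} \<in> nedges G"
      using e A by (auto simp: reverse_arc_def insert_commute dest: orientation_edge)
  next
    fix x y assume xy: "{x, y} \<in> nedges G"
    show "(x, y) \<in> reverse_arc A z v \<longleftrightarrow> (y, x) \<notin> reverse_arc A z v"
    proof (cases "{x, y} = {z, v}")
      case True
      then show ?thesis using \<open>z \<noteq> v\<close> by (auto simp: reverse_arc_def doubleton_eq_iff)
    next
      case False
      then have "(x, y) \<notin> {(z, v), (v, z)}" "(y, x) \<notin> {(z, v), (v, z)}"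
        by (auto simp: insert_commute)
      then show ?thesis using orientation_arc_iff[OF A xy] by (auto simp: reverse_arc_def)
    qed
  qed
qed

lemma finite_in_neighbours:
  assumes "ncl_instance G" "orientation G A"
  shows "finite {u. (u, v) \<in> A \<and> P u}"
proof (rule finite_subset)
  show "{u. (u, v) \<in> A \<and> P u} \<subseteq> nverts G"
    using assms orientation_edge[OF assms(2)] unfolding ncl_instance_def by blast
  show "finite (nverts G)" using assms(1) unfolding ncl_instance_def by blast
qed

lemma card_neighbours_eq_card_incident:
  assumes "\<forall>e \<in> F. card e = 2"
  shows "card {z. {z, v} \<in> F} = card (incident F v)"
proof (rule bij_betw_same_card[of "\<lambda>z. {z, v}"], rule bij_betwI')
  fix e assume "e \<in> incident F v"
  then have "e \<in> F" "v \<in> e" unfolding incident_def by auto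
  moreover obtain a b where "e = {a, b}" "a \<noteq> b"
    using assms \<open>e \<in> F\<close> by (auto simp: card_2_iff)
  ultimately show "\<exists>z \<in> {z. {z, v} \<in> F}. e = {z, v}"
    by (auto simp: insert_commute)
qed (auto simp: doubleton_eq_iff incident_def)

lemma card_neighbours_ncl:
  assumes "ncl_instance G" "v \<in> nverts G"
  shows "card {z. {z, v} \<in> nedges G} = 3"
  using card_neighbours_eq_card_incident[of "nedges G" v] assms
  unfolding ncl_instance_def by auto

lemma blue_neighbour_ncl:
  assumes "ncl_instance G" "v \<in> nverts G"
  obtains w where "{w, v} \<in> nblue G"
proof -
  have "card {z. {z, v} \<in> nblue G} \<ge> 1"
    using card_neighbours_eq_card_incident[of "nblue G" v] assms
    unfolding ncl_instance_def by fastforce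
  then show ?thesis
    using that by (metis (no_types, lifting) Collect_empty_eq card.empty not_one_le_zero)
qed

lemma satisfied_if_blue_in_arc:
  assumes "ncl_instance G" "orientation G A" "(w, v) \<in> A" "{w, v} \<in> nblue G"
  shows "satisfied G A v"
proof -
  have "{u. (u, v) \<in> A \<and> {u, v} \<in> nblue G} \<noteq> {}" using assms(3,4) by blast
  then have "in_blue G A v > 0"
    using finite_in_neighbours[OF assms(1,2)] unfolding in_blue_def by (simp add: card_gt_0_iff)
  then show ?thesis unfolding satisfied_def by simp
qed

lemma reverse_arc_solution:
  assumes G: "ncl_instance G" and A: "A \<in> ncl_solutions G" and zv: "(z, v) \<in> A"
    and sat_v: "satisfied G (reverse_arc A z v) v"
  shows "reverse_arc A z v \<in> ncl_solutions G"
proof -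
  let ?B = "reverse_arc A z v"
  have oA: "orientation G A" using A by (simp add: ncl_solutions_iff)
  have oB: "orientation G ?B" using orientation_reverse_arc[OF oA zv] .
  have "satisfied G ?B x" if x: "x \<in> nverts G" for x
  proof (cases "x = v")
    case False
    have more_in: "{u. (u, x) \<in> A \<and> P u} \<subseteq> {u. (u, x) \<in> ?B \<and> P u}" for P
      using False unfolding reverse_arc_def by auto
    have "in_blue G A x \<le> in_blue G ?B x" "in_red G A x \<le> in_red G ?B x"
      unfolding in_blue_def in_red_def
      by (rule card_mono[OF finite_in_neighbours[OF G oB] more_in])+
    moreover have "satisfied G A x" using A x by (simp add: ncl_solutions_iff)
    ultimately show ?thesis unfolding satisfied_def by linarith
  qed (use sat_v in simp)
  then show ?thesis using oB by (simp add: ncl_solutions_iff)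
qed

lemma reversible_arc_if_converse_unsatisfied:
  assumes G: "ncl_instance G" and A: "A \<in> ncl_solutions G"
    and v: "v \<in> nverts G" and unsat: "\<not> satisfied G (converse A) v"
  obtains z where "(z, v) \<in> A" "satisfied G (reverse_arc A z v) v"
proof -
  have oA: "orientation G A" using A by (simp add: ncl_solutions_iff)
  have oR: "orientation G (converse A)" using orientation_converse[OF oA] .
  have blue_edges: "nblue G \<subseteq> nedges G" using G unfolding ncl_instance_def by blast
  define N where "N = {z. {z, v} \<in> nedges G}"
  define Out_red where "Out_red = {u. (u, v) \<in> converse A \<and> {u, v} \<in> nedges G - nblue G}"
  obtain w where w: "{w, v} \<in> nblue G" using blue_neighbour_ncl[OF G v] .
  have "in_blue G (converse A) v = 0" using unsat unfolding satisfied_def by simp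
  then have no_blue_out: "{u. (u, v) \<in> converse A \<and> {u, v} \<in> nblue G} = {}"
    using finite_in_neighbours[OF G oR, of v "\<lambda>u. {u, v} \<in> nblue G"]
    unfolding in_blue_def by simp
  have "card Out_red \<le> 1" using unsat unfolding satisfied_def in_red_def Out_red_def by simp
  moreover have "card (N - {w}) = 2"
    using card_neighbours_ncl[OF G v] w blue_edges unfolding N_def by auto
  ultimately have "card (N - {w} - Out_red) \<ge> 1"
    using diff_card_le_card_Diff[of Out_red "N - {w}"] finite_in_neighbours[OF G oR]
    unfolding Out_red_def by simp
  then obtain z where z: "z \<in> N" "z \<noteq> w" "z \<notin> Out_red"
    by (metis (no_types, lifting) DiffE card.empty ex_in_conv insertI1 not_one_le_zero)
  have "(v, z) \<notin> A"
    using z no_blue_out unfolding Out_red_def N_def by auto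
  then have zv: "(z, v) \<in> A"
    using orientation_arc_iff[OF oA] z(1) unfolding N_def by blast
  have "{w, v} \<in> nedges G" using w blue_edges by blast
  moreover have "(v, w) \<notin> A" using no_blue_out w by blast
  ultimately have "(w, v) \<in> A" using orientation_arc_iff[OF oA] by blast
  then have "(w, v) \<in> reverse_arc A z v"
    using z(2) unfolding reverse_arc_def by auto
  then have "satisfied G (reverse_arc A z v) v"
    by (rule satisfied_if_blue_in_arc[OF G orientation_reverse_arc[OF oA zv] _ w])
  with zv show ?thesis by (rule that)
qed

lemma another_solution:
  assumes G: "ncl_instance G" and A: "A \<in> ncl_solutions G"
  obtains B where "B \<in> ncl_solutions G" "B \<noteq> A"
proof (cases "converse A \<in> ncl_solutions G")
  case True
  obtain v where v: "v \<in> nverts G" using G unfolding ncl_instance_def by auto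
  have "card {z. {z, v} \<in> nedges G} = 3" using card_neighbours_ncl[OF G v] .
  then obtain z where e: "{z, v} \<in> nedges G"
    by (metis (no_types, lifting) Collect_empty_eq card.empty zero_neq_numeral)
  have "converse A \<noteq> A"
    using A orientation_converse_neq[OF _ e] unfolding ncl_solutions_iff by blast
  with True show ?thesis by (rule that)
next
  case False
  have oA: "orientation G A" using A by (simp add: ncl_solutions_iff)
  obtain v where "v \<in> nverts G" "\<not> satisfied G (converse A) v"
    using False orientation_converse[OF oA] by (auto simp: ncl_solutions_iff)
  then obtain z where zv: "(z, v) \<in> A" and "satisfied G (reverse_arc A z v) v"
    using reversible_arc_if_converse_unsatisfied[OF G A] by blast
  then have "reverse_arc A z v \<in> ncl_solutions G"
    using reverse_arc_solution[OF G A] by blast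
  moreover have "reverse_arc A z v \<noteq> A"
    using orientation_arc_iff[OF oA orientation_edge[OF oA zv]] zv
    unfolding reverse_arc_def by auto
  ultimately show ?thesis by (rule that)
qed

lemma card_ncl_solutions_neq_1:
  assumes "ncl_instance G"
  shows "card (ncl_solutions G) \<noteq> 1"
proof
  assume "card (ncl_solutions G) = 1"
  then obtain A where "ncl_solutions G = {A}" by (auto simp: card_1_singleton_iff)
  then show False using another_solution[OF assms, of A] by auto
qed

lemma sat_count_Nil: "sat_count [] = 1"
proof -
  have "{T. T \<subseteq> cnf_vars [] \<and> cnf_sat T []} = {{}}"
    unfolding cnf_vars_def cnf_sat_def by auto
  then show ?thesis unfolding sat_count_def by simp
qed

theorem corollary19:
  shows "\<not> (\<exists>f :: cnf \<Rightarrow> nat ncl.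
            \<forall>F. ncl_instance (f F) \<and> card (ncl_solutions (f F)) = sat_count F)"
  using card_ncl_solutions_neq_1 sat_count_Nil by metis

end
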